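(* Let $\mathcal H$ be a complex Hilbert space, $A, B$ bounded self-adjoint operators on $\mathcal H$ and $C$ a bounded operator on $\mathcal H$. Let $M$ be a closed subspace of $\mathcal H$ invariant for $A$, $B$ and $C$, such that $\sigma(A|_{M^\perp}) \cap \sigma(B|_M) = \emptyset$ and $B|_M$ is a compact operator on $M$. If $D$ is a bounded operator on $\mathcal H$ with $AD - DB = C$, then $M$ is invariant for $D$.
   Context: $\sigma(\cdot)$ denotes the spectrum and $M^\perp$ the orthogonal complement of $M$. *)

theory Defs
  imports "HOL-Analysis.Analysis"
begin

text \<open>The distribution has no complex inner product spaces, so we introduce them here.
  Convention: the inner product is conjugate-linear in the first and linear in the second
  argument.\<close>

class complex_vector = real_vector +
  fixes scaleC :: "complex \<Rightarrow> 'a \<Rightarrow> 'a" (infixr \<open>*\<^sub>C\<close> 75)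
  assumes scaleC_add_right: "scaleC a (x + y) = scaleC a x + scaleC a y"
    and scaleC_add_left: "scaleC (a + b) x = scaleC a x + scaleC b x"
    and scaleC_scaleC: "scaleC a (scaleC b x) = scaleC (a * b) x"
    and scaleC_one: "scaleC 1 x = x"
    and scaleR_scaleC: "scaleR r x = scaleC (complex_of_real r) x"

class complex_inner = complex_vector + real_normed_vector +
  fixes cinner :: "'a \<Rightarrow> 'a \<Rightarrow> complex"
  assumes cinner_commute: "cinner x y = cnj (cinner y x)"
    and cinner_add_left: "cinner (x + y) z = cinner x z + cinner y z"
    and cinner_scaleC_left: "cinner (scaleC r x) y = cnj r * cinner x y"
    and cinner_self_real: "Im (cinner x x) = 0"
    and cinner_self_nonneg: "0 \<le> Re (cinner x x)"
    and cinner_self_eq_zero: "cinner x x = 0 \<longleftrightarrow> x = 0"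
    and norm_eq_sqrt_cinner: "norm x = sqrt (Re (cinner x x))"

class chilbert_space = complex_inner + complete_space

instantiation complex :: complex_vector
begin
definition scaleC_complex :: "complex \<Rightarrow> complex \<Rightarrow> complex" where
  "scaleC_complex a x = a * x"
instance
  by standard (simp_all add: scaleC_complex_def algebra_simps scaleR_conv_of_real)
end

instantiation complex :: complex_inner
begin
definition cinner_complex :: "complex \<Rightarrow> complex \<Rightarrow> complex" where
  "cinner_complex x y = cnj x * y"
instance
proof
  fix x y z :: complex and r :: complex
  show "cinner x y = cnj (cinner y x)" by (simp add: cinner_complex_def mult.commute)
  show "cinner (x + y) z = cinner x z + cinner y z" by (simp add: cinner_complex_def algebra_simps)
  show "cinner (r *\<^sub>C x) y = cnj r * cinner x y" by (simp add: cinner_complex_def scaleC_complex_def)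
  show "Im (cinner x x) = 0" by (simp add: cinner_complex_def)
  show "0 \<le> Re (cinner x x)" by (simp add: cinner_complex_def)
  show "cinner x x = 0 \<longleftrightarrow> x = 0" by (simp add: cinner_complex_def)
  show "norm x = sqrt (Re (cinner x x))" by (simp add: cinner_complex_def cmod_def power2_eq_square)
qed
end

instance complex :: chilbert_space ..

definition bounded_clinear :: "('a::complex_inner \<Rightarrow> 'b::complex_inner) \<Rightarrow> bool" where
  "bounded_clinear T \<longleftrightarrow> bounded_linear T \<and> (\<forall>c x. T (c *\<^sub>C x) = c *\<^sub>C T x)"

definition selfadjoint :: "('a::complex_inner \<Rightarrow> 'a) \<Rightarrow> bool" where
  "selfadjoint T \<longleftrightarrow> (\<forall>x y. cinner (T x) y = cinner x (T y))"

definition closed_csubspace :: "'a::complex_inner set \<Rightarrow> bool" where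
  "closed_csubspace M \<longleftrightarrow> 0 \<in> M \<and> (\<forall>x\<in>M. \<forall>y\<in>M. x + y \<in> M)
     \<and> (\<forall>c. \<forall>x\<in>M. c *\<^sub>C x \<in> M) \<and> closed M"

definition invariant :: "'a set \<Rightarrow> ('a \<Rightarrow> 'a) \<Rightarrow> bool" where
  "invariant M T \<longleftrightarrow> T ` M \<subseteq> M"

definition orth :: "'a::complex_inner set \<Rightarrow> 'a set" where
  "orth M = {y. \<forall>x\<in>M. cinner x y = 0}"

definition invertible_on :: "'a::complex_inner set \<Rightarrow> ('a \<Rightarrow> 'a) \<Rightarrow> bool" where
  "invertible_on S T \<longleftrightarrow> (\<exists>R. (\<forall>x\<in>S. R x \<in> S \<and> R (T x) = x \<and> T (R x) = x)
       \<and> (\<exists>K. \<forall>x\<in>S. norm (R x) \<le> K * norm x))"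

definition spectrum_on :: "'a::complex_inner set \<Rightarrow> ('a \<Rightarrow> 'a) \<Rightarrow> complex set" where
  "spectrum_on S T = {l. \<not> invertible_on S (\<lambda>x. T x - l *\<^sub>C x)}"

definition compact_on :: "'a::complex_inner set \<Rightarrow> ('a \<Rightarrow> 'a) \<Rightarrow> bool" where
  "compact_on S T \<longleftrightarrow> compact (closure (T ` (S \<inter> cball 0 1)))"

end

theory Submission
  imports Defs
begin

text \<open>Put \<open>K = M \<inter> D\<^sup>-\<^sup>1(M)\<close>. The equation \<open>A D - D B = C\<close> makes \<open>K\<close> invariant under \<open>B\<close>,
  and as \<open>B\<close> is self-adjoint, \<open>K' = M \<inter> K\<^sup>\<bottom>\<close> is \<open>B\<close>-invariant too; \<open>B\<close> is still compact on
  \<open>K'\<close>. If \<open>K' \<noteq> 0\<close>, the restriction of \<open>B\<close> to \<open>K'\<close>, being compact and self-adjoint, has an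
  eigenvector \<open>v\<close> whose eigenvalue \<open>l\<close> lies in \<open>\<sigma>(B|\<^sub>M)\<close>, so \<open>A - l\<close> is invertible on \<open>M\<^sup>\<bottom>\<close>.
  Since \<open>(A - l) D v = C v \<in> M\<close>, the operator \<open>A - l\<close> maps the \<open>M\<^sup>\<bottom>\<close>-component of \<open>D v\<close> into
  \<open>M \<inter> M\<^sup>\<bottom> = 0\<close>, so that component vanishes. Thus \<open>D v \<in> M\<close>, whence \<open>v \<in> K \<inter> K\<^sup>\<bottom> = 0\<close>,
  a contradiction; hence \<open>K' = 0\<close>, that is \<open>K = M\<close>.

  The eigenvector comes from the usual argument: if \<open>s\<close> is the norm of \<open>B\<close> on \<open>K'\<close>, a sequence
  in the unit ball with \<open>\<parallel>B x\<^sub>n\<parallel> \<longrightarrow> s\<close> satisfies \<open>B\<^sup>2 x\<^sub>n - s\<^sup>2 x\<^sub>n \<longrightarrow> 0\<close>, compactness yields a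
  limit \<open>v\<close> with \<open>B\<^sup>2 v = s\<^sup>2 v\<close>, and then \<open>v\<close> or \<open>B v + s v\<close> is an eigenvector of \<open>B\<close>.\<close>

section \<open>Complex inner product spaces\<close>

interpretation complex_vector: vector_space "scaleC :: complex \<Rightarrow> 'a \<Rightarrow> 'a::complex_vector"
  by unfold_locales (simp_all add: scaleC_add_right scaleC_add_left scaleC_scaleC scaleC_one)

lemma cinner_add_right: "cinner x (y + z) = cinner x y + cinner x z"
  by (metis cinner_commute cinner_add_left complex_cnj_add)

lemma cinner_scaleC_right: "cinner x (c *\<^sub>C y) = c * cinner x y"
  by (metis cinner_commute cinner_scaleC_left complex_cnj_cnj complex_cnj_mult)

lemma cinner_zero_right [simp]: "cinner x 0 = 0"
  using cinner_add_right[of x 0 0] by simp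

lemma cinner_diff_left: "cinner (x - y) z = cinner x z - cinner y z"
  using cinner_add_left[of "x - y" y z] by simp

lemma cinner_diff_right: "cinner x (y - z) = cinner x y - cinner x z"
  using cinner_add_right[of x "y - z" z] by simp

lemma cinner_scaleR_right: "cinner x (r *\<^sub>R y) = of_real r * cinner x y"
  by (simp add: scaleR_scaleC cinner_scaleC_right)

lemma power2_norm_eq_cinner: "(norm x)\<^sup>2 = Re (cinner x x)"
  by (simp add: norm_eq_sqrt_cinner cinner_self_nonneg)

lemma Re_cinner_commute: "Re (cinner x y) = Re (cinner y x)"
  by (subst cinner_commute) simp

lemma norm_add_power2: "(norm (x + y))\<^sup>2 = (norm x)\<^sup>2 + 2 * Re (cinner x y) + (norm y)\<^sup>2"
  unfolding power2_norm_eq_cinner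
  by (simp add: cinner_add_left cinner_add_right Re_cinner_commute[of y x])

lemma norm_diff_power2: "(norm (x - y))\<^sup>2 = (norm x)\<^sup>2 - 2 * Re (cinner x y) + (norm y)\<^sup>2"
  unfolding power2_norm_eq_cinner
  by (simp add: cinner_diff_left cinner_diff_right Re_cinner_commute[of y x])

lemma cinner_polarization:
  "cinner x y = Complex (((norm (x + y))\<^sup>2 - (norm (x - y))\<^sup>2) / 4)
     (((norm (\<i> *\<^sub>C x + y))\<^sup>2 - (norm (\<i> *\<^sub>C x - y))\<^sup>2) / 4)"
  by (simp add: norm_add_power2 norm_diff_power2 cinner_scaleC_left complex_eq_iff)

lemma isCont_cinner_right: "isCont (cinner x) y"
  by (subst cinner_polarization[abs_def]) (simp add: Complex_eq continuous_intros)

lemma closed_csubspace_iff: "closed_csubspace M \<longleftrightarrow> complex_vector.subspace M \<and> closed M"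
  unfolding closed_csubspace_def complex_vector.subspace_def by auto

lemma closed_csubspace_Int:
  "closed_csubspace M \<Longrightarrow> closed_csubspace N \<Longrightarrow> closed_csubspace (M \<inter> N)"
  by (simp add: closed_csubspace_iff complex_vector.subspace_inter closed_Int)

lemma closed_csubspace_vimage:
  assumes "bounded_clinear D" and "closed_csubspace M"
  shows "closed_csubspace (D -` M)"
proof -
  interpret D: bounded_linear D
    using assms(1) unfolding bounded_clinear_def by simp
  have "complex_vector.subspace (D -` M)"
    using assms unfolding bounded_clinear_def closed_csubspace_def complex_vector.subspace_def
    by (auto simp: D.add)
  moreover have "closed (D -` M)"
    using assms by (intro continuous_closed_vimage linear_continuous_at)
      (simp_all add: closed_csubspace_iff bounded_clinear_def)
  ultimately show ?thesis
    by (simp add: closed_csubspace_iff)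
qed

lemma closed_csubspace_orth: "closed_csubspace (orth M)"
proof -
  have "orth M = (\<Inter>x\<in>M. cinner x -` {0})"
    unfolding orth_def by auto
  moreover have "closed (\<Inter>x\<in>M. cinner x -` {0})"
    by (intro closed_INT ballI continuous_closed_vimage isCont_cinner_right) simp
  ultimately show ?thesis
    unfolding closed_csubspace_def orth_def by (auto simp: cinner_add_right cinner_scaleC_right)
qed

lemma mem_orth_self_eq_zero: "x \<in> M \<Longrightarrow> x \<in> orth M \<Longrightarrow> x = 0"
  unfolding orth_def using cinner_self_eq_zero by blast

lemma invariant_orth_selfadjoint:
  assumes "selfadjoint T" and "invariant M T"
  shows "invariant (orth M) T"
  unfolding invariant_def orth_def
proof clarify
  fix x y assume "\<forall>z\<in>M. cinner z y = 0" and "x \<in> M"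
  moreover have "T x \<in> M"
    using \<open>x \<in> M\<close> assms(2) unfolding invariant_def by blast
  ultimately show "cinner x (T y) = 0"
    using assms(1) unfolding selfadjoint_def by metis
qed

section \<open>Orthogonal decomposition\<close>

lemma linear_coeff_zero_if_quadratic_nonneg:
  fixes a b :: real
  assumes "b \<ge> 0" and "\<And>t. 0 \<le> t\<^sup>2 * b - 2 * t * a"
  shows "a = 0"
proof -
  define t where "t = a / (b + 1)"
  have a: "a = t * (b + 1)"
    using assms(1) by (simp add: t_def)
  have "t\<^sup>2 * b - 2 * t * a = - t\<^sup>2 * (b + 2)"
    unfolding a by (simp add: algebra_simps power2_eq_square)
  then have "t\<^sup>2 * (b + 2) \<le> 0"
    using assms(2)[of t] by simp
  then have "t = 0"
    using assms(1) by (simp add: mult_le_0_iff)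
  then show ?thesis
    using a by simp
qed

lemma Cauchy_if_dist_le_null_sequence:
  fixes X :: "nat \<Rightarrow> 'a::metric_space"
  assumes "\<And>m n. dist (X m) (X n) \<le> e m + e n" and "e \<longlonglongrightarrow> 0"
  shows "Cauchy X"
proof (rule metric_CauchyI)
  fix r :: real assume "r > 0"
  then have "\<forall>\<^sub>F n in sequentially. e n < r / 2"
    using order_tendstoD(2)[OF assms(2), of "r / 2"] by simp
  then obtain N where N: "\<And>n. n \<ge> N \<Longrightarrow> e n < r / 2"
    unfolding eventually_sequentially by blast
  have "dist (X m) (X n) < r" if "m \<ge> N" "n \<ge> N" for m n
    using assms(1)[of m n] N[OF that(1)] N[OF that(2)] by linarith
  then show "\<exists>N. \<forall>m\<ge>N. \<forall>n\<ge>N. dist (X m) (X n) < r"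
    by blast
qed

lemma parallelogram_law:
  fixes x y :: "'a::complex_inner"
  shows "(norm (x + y))\<^sup>2 + (norm (x - y))\<^sup>2 = 2 * (norm x)\<^sup>2 + 2 * (norm y)\<^sup>2"
  by (simp add: norm_add_power2 norm_diff_power2)

lemma Cauchy_minimizing_sequence:
  fixes S :: "'a::complex_inner set"
  assumes sub: "complex_vector.subspace S"
    and d_le: "\<And>s. s \<in> S \<Longrightarrow> d \<le> (norm (x - s))\<^sup>2"
    and s: "\<And>n. s n \<in> S" and lim: "(\<lambda>n. (norm (x - s n))\<^sup>2) \<longlonglongrightarrow> d"
  shows "Cauchy s"
proof -
  define e where "e n = sqrt (2 * ((norm (x - s n))\<^sup>2 - d))" for n
  have "dist (s m) (s n) \<le> e m + e n" for m n
  proof -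
    define mid where "mid = (1/2) *\<^sub>R (s m + s n)"
    have "mid \<in> S"
      using s sub unfolding mid_def
      by (simp add: scaleR_scaleC complex_vector.subspace_add complex_vector.subspace_scale)
    have "(x - s m) + (x - s n) = 2 *\<^sub>R (x - mid)"
      by (simp add: mid_def scaleR_2 algebra_simps)
    then have "(norm ((x - s m) + (x - s n)))\<^sup>2 = 4 * (norm (x - mid))\<^sup>2"
      by (simp add: power_mult_distrib)
    also have "\<dots> \<ge> 4 * d"
      using d_le[OF \<open>mid \<in> S\<close>] by simp
    finally have "(norm (s m - s n))\<^sup>2 \<le> (e m)\<^sup>2 + (e n)\<^sup>2"
      using parallelogram_law[of "x - s m" "x - s n"] d_le[OF s] by (simp add: e_def norm_minus_commute)
    then have "norm (s m - s n) \<le> sqrt ((e m)\<^sup>2 + (e n)\<^sup>2)"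
      by (simp add: real_le_rsqrt)
    also have "\<dots> \<le> e m + e n"
      using d_le[OF s] by (intro sqrt_sum_squares_le_sum) (simp_all add: e_def)
    finally show ?thesis
      by (simp add: dist_norm)
  qed
  moreover have "e \<longlonglongrightarrow> sqrt (2 * (d - d))"
    unfolding e_def by (intro tendsto_intros lim)
  ultimately show ?thesis
    by (intro Cauchy_if_dist_le_null_sequence[of _ e]) simp_all
qed

lemma closed_csubspace_nearest_point:
  fixes S :: "'a::chilbert_space set"
  assumes S: "closed_csubspace S"
  obtains p where "p \<in> S" and "\<And>s. s \<in> S \<Longrightarrow> norm (x - p) \<le> norm (x - s)"
proof -
  have sub: "complex_vector.subspace S" and "closed S"
    using S by (simp_all add: closed_csubspace_iff)
  define d where "d = Inf ((\<lambda>s. (norm (x - s))\<^sup>2) ` S)"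
  have bdd: "bdd_below ((\<lambda>s. (norm (x - s))\<^sup>2) ` S)"
    by (rule bdd_belowI[of _ 0]) auto
  have d_le: "d \<le> (norm (x - s))\<^sup>2" if "s \<in> S" for s
    unfolding d_def using bdd that by (auto intro: cInf_lower)
  have "d \<in> closure ((\<lambda>s. (norm (x - s))\<^sup>2) ` S)"
    unfolding d_def using bdd complex_vector.subspace_0[OF sub] by (intro closure_contains_Inf) auto
  then obtain y where y: "\<And>n. y n \<in> (\<lambda>s. (norm (x - s))\<^sup>2) ` S" and "y \<longlonglongrightarrow> d"
    unfolding closure_sequential by blast
  have "\<forall>n. \<exists>t. t \<in> S \<and> y n = (norm (x - t))\<^sup>2"
    using y by blast
  then obtain s where s: "\<And>n. s n \<in> S" and y_eq: "\<And>n. y n = (norm (x - s n))\<^sup>2"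
    by (metis choice)
  have lim: "(\<lambda>n. (norm (x - s n))\<^sup>2) \<longlonglongrightarrow> d"
    using \<open>y \<longlonglongrightarrow> d\<close> by (simp add: y_eq[symmetric])
  have "Cauchy s"
    by (rule Cauchy_minimizing_sequence[OF sub _ s lim]) (rule d_le)
  then obtain p where p: "s \<longlonglongrightarrow> p"
    unfolding Cauchy_convergent_iff convergent_def by blast
  have "p \<in> S"
    using \<open>closed S\<close> s p closed_sequentially by blast
  moreover have "(norm (x - p))\<^sup>2 = d"
    by (rule LIMSEQ_unique[OF _ lim]) (intro tendsto_intros p)
  then have "norm (x - p) \<le> norm (x - t)" if "t \<in> S" for t
    using d_le[OF that] by (simp add: power2_le_imp_le)
  ultimately show thesis
    using that by blast
qed

lemma nearest_point_orth:
  assumes S: "closed_csubspace S" and "p \<in> S"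
    and nearest: "\<And>s. s \<in> S \<Longrightarrow> norm (x - p) \<le> norm (x - s)"
  shows "x - p \<in> orth S"
proof -
  have sub: "complex_vector.subspace S"
    using S by (simp add: closed_csubspace_iff)
  have Re0: "Re (cinner u (x - p)) = 0" if "u \<in> S" for u
  proof (rule linear_coeff_zero_if_quadratic_nonneg[where b = "(norm u)\<^sup>2"])
    fix t :: real
    have "p + t *\<^sub>R u \<in> S"
      using sub \<open>p \<in> S\<close> that
      by (simp add: scaleR_scaleC complex_vector.subspace_add complex_vector.subspace_scale)
    then have "(norm (x - p))\<^sup>2 \<le> (norm ((x - p) - t *\<^sub>R u))\<^sup>2"
      using nearest by (simp add: diff_diff_eq power_mono)
    also have "\<dots> = (norm (x - p))\<^sup>2 - 2 * t * Re (cinner u (x - p)) + t\<^sup>2 * (norm u)\<^sup>2"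
      by (simp add: norm_diff_power2 cinner_scaleR_right Re_cinner_commute[of "x - p"] power_mult_distrib)
    finally show "0 \<le> t\<^sup>2 * (norm u)\<^sup>2 - 2 * t * Re (cinner u (x - p))"
      by simp
  qed simp
  have "cinner u (x - p) = 0" if "u \<in> S" for u
  proof -
    have "\<i> *\<^sub>C u \<in> S"
      using sub that by (rule complex_vector.subspace_scale)
    then have "Im (cinner u (x - p)) = 0"
      using Re0[of "\<i> *\<^sub>C u"] by (simp add: cinner_scaleC_left)
    then show ?thesis
      using Re0[OF that] by (simp add: complex_eq_iff)
  qed
  then show ?thesis
    unfolding orth_def by blast
qed

lemma orth_decomposition:
  fixes S :: "'a::chilbert_space set"
  assumes "closed_csubspace S"
  obtains p where "p \<in> S" and "x - p \<in> orth S"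
proof -
  obtain p where "p \<in> S" and "\<And>s. s \<in> S \<Longrightarrow> norm (x - p) \<le> norm (x - s)"
    using closed_csubspace_nearest_point[OF assms] by blast
  then show thesis
    using that nearest_point_orth[OF assms] by blast
qed

lemma closed_csubspace_eq_if_orth_trivial:
  fixes K M :: "'a::chilbert_space set"
  assumes "closed_csubspace K" and "closed_csubspace M" and "K \<subseteq> M"
    and "M \<inter> orth K \<subseteq> {0}"
  shows "K = M"
proof
  show "M \<subseteq> K"
  proof
    fix x assume "x \<in> M"
    obtain k where "k \<in> K" and "x - k \<in> orth K"
      using orth_decomposition[OF assms(1)] by blast
    moreover have "x - k \<in> M"
      using assms(2,3) \<open>x \<in> M\<close> \<open>k \<in> K\<close>
      by (auto simp: closed_csubspace_iff intro: complex_vector.subspace_diff)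
    ultimately show "x \<in> K"
      using assms(4) by auto
  qed
qed (rule assms(3))

section \<open>Spectra and eigenvectors\<close>

lemma invertible_on_kernel_eq_zero:
  assumes "invertible_on S T" and "0 \<in> S" and "T 0 = 0" and "y \<in> S" and "T y = 0"
  shows "y = 0"
  using assms unfolding invertible_on_def by metis

lemma eigenvalue_in_spectrum_on:
  assumes "linear T" and "0 \<in> S" and "v \<in> S" and "v \<noteq> 0" and "T v = l *\<^sub>C v"
  shows "l \<in> spectrum_on S T"
  using invertible_on_kernel_eq_zero[of S "\<lambda>x. T x - l *\<^sub>C x" v] assms
  by (auto simp: spectrum_on_def linear_0)

lemma compact_on_subset:
  assumes "compact_on M T" and "S \<subseteq> M"
  shows "compact_on S T"
proof -
  have "closure (T ` (S \<inter> cball 0 1)) \<subseteq> closure (T ` (M \<inter> cball 0 1))"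
    using assms(2) by (intro closure_mono image_mono) blast
  moreover have "compact (closure (T ` (M \<inter> cball 0 1)) \<inter> closure (T ` (S \<inter> cball 0 1)))"
    using assms(1) unfolding compact_on_def by (intro compact_Int_closed closed_closure)
  ultimately show ?thesis
    unfolding compact_on_def by (simp add: Int_absorb1)
qed

lemma eigenvector_of_square_eigenvector:
  fixes B :: "'a::complex_vector \<Rightarrow> 'a" and s :: real
  assumes "linear B" and "complex_vector.subspace S" and "invariant S B"
    and "v \<in> S" and "v \<noteq> 0" and "B (B v) = s\<^sup>2 *\<^sub>R v"
  shows "\<exists>u\<in>S. u \<noteq> 0 \<and> (\<exists>l. B u = l *\<^sub>C u)"
proof (cases "B v + s *\<^sub>R v = 0")
  case True
  then have "B v = complex_of_real (- s) *\<^sub>C v"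
    by (simp add: eq_neg_iff_add_eq_0 flip: scaleR_scaleC)
  then show ?thesis
    using assms(4,5) by blast
next
  case False
  have "B (B v + s *\<^sub>R v) = complex_of_real s *\<^sub>C (B v + s *\<^sub>R v)"
    using assms(1,6)
    by (simp add: linear_add linear_scale scaleR_add_right power2_eq_square flip: scaleR_scaleC)
  moreover have "B v + s *\<^sub>R v \<in> S"
    using assms(2-4) unfolding invariant_def
    by (auto simp: scaleR_scaleC intro: complex_vector.subspace_add complex_vector.subspace_scale)
  ultimately show ?thesis
    using False by blast
qed

lemma selfadjoint_approximate_square_eigenvector:
  fixes B :: "'a::complex_inner \<Rightarrow> 'a"
  assumes "selfadjoint B" and "invariant S B" and "s \<ge> 0"
    and bound: "\<And>y. y \<in> S \<Longrightarrow> norm (B y) \<le> s * norm y"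
    and xs: "\<And>n. xs n \<in> S" "\<And>n. norm (xs n) \<le> 1"
    and lim: "(\<lambda>n. norm (B (xs n))) \<longlonglongrightarrow> s"
  shows "(\<lambda>n. B (B (xs n)) - s\<^sup>2 *\<^sub>R xs n) \<longlonglongrightarrow> 0"
proof -
  define w where "w n = B (B (xs n)) - s\<^sup>2 *\<^sub>R xs n" for n
  have w_le: "(norm (w n))\<^sup>2 \<le> 2 * s^4 - 2 * s\<^sup>2 * (norm (B (xs n)))\<^sup>2" for n
  proof -
    have "B (xs n) \<in> S"
      using assms(2) xs(1) unfolding invariant_def by blast
    then have "norm (B (B (xs n))) \<le> s * norm (B (xs n))"
      by (rule bound)
    also have "\<dots> \<le> s * (s * norm (xs n))"
      using bound[OF xs(1)] assms(3) by (rule mult_left_mono)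
    also have "\<dots> \<le> s\<^sup>2"
      using mult_left_le[OF xs(2)[of n], of "s * s"] assms(3) by (simp add: power2_eq_square mult.assoc)
    finally have "(norm (B (B (xs n))))\<^sup>2 \<le> s^4"
      using power_mono[of _ "s\<^sup>2" 2] by (simp add: power_mult[symmetric])
    moreover have "(norm (s\<^sup>2 *\<^sub>R xs n))\<^sup>2 \<le> s^4"
      using power_mono[OF xs(2)[of n], of 2] by (simp add: power_mult_distrib power_mult[symmetric] mult_left_le)
    moreover have "Re (cinner (B (B (xs n))) (s\<^sup>2 *\<^sub>R xs n)) = s\<^sup>2 * (norm (B (xs n)))\<^sup>2"
      using assms(1) by (simp add: selfadjoint_def cinner_scaleR_right power2_norm_eq_cinner)
    ultimately show ?thesis
      unfolding w_def norm_diff_power2 by linarith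
  qed
  have "(\<lambda>n. 2 * s^4 - 2 * s\<^sup>2 * (norm (B (xs n)))\<^sup>2) \<longlonglongrightarrow> 2 * s^4 - 2 * s\<^sup>2 * s\<^sup>2"
    by (intro tendsto_intros lim)
  also have "2 * s^4 - 2 * s\<^sup>2 * s\<^sup>2 = 0"
    by (simp add: power4_eq_xxxx power2_eq_square)
  finally have upper: "(\<lambda>n. 2 * s^4 - 2 * s\<^sup>2 * (norm (B (xs n)))\<^sup>2) \<longlonglongrightarrow> 0" .
  have "(\<lambda>n. (norm (w n))\<^sup>2) \<longlonglongrightarrow> 0"
    by (rule tendsto_sandwich[OF always_eventually always_eventually tendsto_const upper])
      (simp_all add: w_le)
  then have "(\<lambda>n. sqrt ((norm (w n))\<^sup>2)) \<longlonglongrightarrow> sqrt 0"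
    by (rule tendsto_real_sqrt)
  then show ?thesis
    by (simp add: w_def tendsto_norm_zero_iff)
qed

lemma bounded_linear_norm_on_subspace:
  fixes B :: "'a::complex_inner \<Rightarrow> 'b::real_normed_vector"
  assumes "bounded_linear B" and "complex_vector.subspace S"
  obtains s xs where "s \<ge> 0" and "\<And>y. y \<in> S \<Longrightarrow> norm (B y) \<le> s * norm y"
    and "\<And>n. xs n \<in> S \<inter> cball 0 1" and "(\<lambda>n. norm (B (xs n))) \<longlonglongrightarrow> s"
proof -
  interpret B: bounded_linear B by fact
  define N where "N = (\<lambda>x. norm (B x)) ` (S \<inter> cball 0 1)"
  obtain K where K: "\<And>x. norm (B x) \<le> norm x * K" and "K > 0"
    using B.pos_bounded by blast
  have "bdd_above N"
    unfolding N_def using K \<open>K > 0\<close>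
    by (intro bdd_aboveI[of _ K]) (auto intro!: order_trans[OF K] mult_left_le_one_le)
  moreover have "0 \<in> S"
    using assms(2) by (rule complex_vector.subspace_0)
  ultimately have N_le: "norm (B x) \<le> Sup N" if "x \<in> S \<inter> cball 0 1" for x
    using that unfolding N_def by (intro cSup_upper) auto
  have "Sup N \<in> closure N"
    using \<open>bdd_above N\<close> \<open>0 \<in> S\<close> unfolding N_def by (intro closure_contains_Sup) auto
  then obtain z where z: "\<And>n. z n \<in> N" and "z \<longlonglongrightarrow> Sup N"
    unfolding closure_sequential by blast
  have "\<forall>n. \<exists>x. x \<in> S \<inter> cball 0 1 \<and> z n = norm (B x)"
    using z unfolding N_def by blast
  then obtain xs where xs: "\<And>n. xs n \<in> S \<inter> cball 0 1" and z_eq: "\<And>n. z n = norm (B (xs n))"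
    by (metis choice)
  have "norm (B y) \<le> Sup N * norm y" if "y \<in> S" for y
  proof (cases "y = 0")
    case False
    have "(1 / norm y) *\<^sub>R y \<in> S"
      using assms(2) that by (simp add: scaleR_scaleC complex_vector.subspace_scale)
    moreover have "(1 / norm y) *\<^sub>R y \<in> cball 0 1"
      using False by simp
    ultimately have "norm (B ((1 / norm y) *\<^sub>R y)) \<le> Sup N"
      by (intro N_le) blast
    then have "norm (B y) / norm y \<le> Sup N"
      by (simp add: B.scaleR)
    then show ?thesis
      using False by (simp add: divide_le_eq mult.commute)
  qed simp
  moreover have "Sup N \<ge> 0"
    using N_le[of 0] \<open>0 \<in> S\<close> by simp
  moreover have "(\<lambda>n. norm (B (xs n))) \<longlonglongrightarrow> Sup N"
    using \<open>z \<longlonglongrightarrow> Sup N\<close> by (simp add: z_eq[symmetric])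
  ultimately show thesis
    using that xs by blast
qed

lemma compact_on_square_eigenvector:
  fixes B :: "'a::chilbert_space \<Rightarrow> 'a" and s :: real
  assumes "bounded_linear B" and "closed S" and "compact_on S B" and "s > 0"
    and xs: "\<And>n. xs n \<in> S \<inter> cball 0 1"
    and norm_lim: "(\<lambda>n. norm (B (xs n))) \<longlonglongrightarrow> s"
    and approx: "(\<lambda>n. B (B (xs n)) - s\<^sup>2 *\<^sub>R xs n) \<longlonglongrightarrow> 0"
  obtains v where "v \<in> S" and "v \<noteq> 0" and "B (B v) = s\<^sup>2 *\<^sub>R v"
proof -
  interpret B: bounded_linear B by fact
  have "seq_compact (closure (B ` (S \<inter> cball 0 1)))"
    using assms(3) unfolding compact_on_def by (rule compact_imp_seq_compact)
  moreover have "\<forall>n. B (xs n) \<in> closure (B ` (S \<inter> cball 0 1))"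
    using xs by (blast intro: closure_subset[THEN subsetD])
  ultimately obtain y r where r: "strict_mono r" and "((\<lambda>n. B (xs n)) \<circ> r) \<longlonglongrightarrow> y"
    by (rule seq_compactE)
  then have y: "(\<lambda>n. B (xs (r n))) \<longlonglongrightarrow> y"
    by (simp add: o_def)
  \<comment> \<open>\<open>xs\<close> differs from \<open>B (B xs) / s\<^sup>2\<close> by a null sequence, so it converges along \<open>r\<close> as well.\<close>
  define v where "v = (1 / s\<^sup>2) *\<^sub>R B y"
  have "(\<lambda>n. B (B (xs (r n))) - s\<^sup>2 *\<^sub>R xs (r n)) \<longlonglongrightarrow> 0"
    using LIMSEQ_subseq_LIMSEQ[OF approx r] by (simp add: o_def)
  then have "(\<lambda>n. (1 / s\<^sup>2) *\<^sub>R (B (B (xs (r n))) - (B (B (xs (r n))) - s\<^sup>2 *\<^sub>R xs (r n))))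
      \<longlonglongrightarrow> (1 / s\<^sup>2) *\<^sub>R (B y - 0)"
    by (intro tendsto_scaleR tendsto_const tendsto_diff B.tendsto y)
  then have xv: "(\<lambda>n. xs (r n)) \<longlonglongrightarrow> v"
    using \<open>s > 0\<close> by (simp add: v_def)
  have "v \<in> S"
    using closed_sequentially[OF assms(2) _ xv] xs by blast
  have "B v = y"
    using B.tendsto[OF xv] y by (rule LIMSEQ_unique)
  moreover have "norm y = s"
    using tendsto_norm[OF y] LIMSEQ_subseq_LIMSEQ[OF norm_lim r]
    by (intro LIMSEQ_unique) (simp_all add: o_def)
  ultimately have "v \<noteq> 0"
    using \<open>s > 0\<close> B.zero by auto
  moreover have "B (B v) = s\<^sup>2 *\<^sub>R v"
    using \<open>B v = y\<close> \<open>s > 0\<close> by (simp add: v_def)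
  ultimately show thesis
    using that \<open>v \<in> S\<close> by blast
qed

lemma selfadjoint_compact_on_eigenvector:
  fixes B :: "'a::chilbert_space \<Rightarrow> 'a"
  assumes "bounded_linear B" and "selfadjoint B" and "closed_csubspace S" and "invariant S B"
    and "compact_on S B" and "S \<noteq> {0}"
  shows "\<exists>v\<in>S. v \<noteq> 0 \<and> (\<exists>l. B v = l *\<^sub>C v)"
proof -
  have sub: "complex_vector.subspace S" and "closed S"
    using assms(3) by (simp_all add: closed_csubspace_iff)
  obtain s xs where "s \<ge> 0" and bound: "\<And>y. y \<in> S \<Longrightarrow> norm (B y) \<le> s * norm y"
    and xs: "\<And>n. xs n \<in> S \<inter> cball 0 1" and norm_lim: "(\<lambda>n. norm (B (xs n))) \<longlonglongrightarrow> s"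
    using bounded_linear_norm_on_subspace[OF assms(1) sub] by blast
  show ?thesis
  proof (cases "s = 0")
    case True
    obtain v where "v \<in> S" and "v \<noteq> 0"
      using assms(6) complex_vector.subspace_0[OF sub] by blast
    moreover have "B v = 0 *\<^sub>C v"
      using bound[OF \<open>v \<in> S\<close>] True by simp
    ultimately show ?thesis
      by blast
  next
    case False
    have "(\<lambda>n. B (B (xs n)) - s\<^sup>2 *\<^sub>R xs n) \<longlonglongrightarrow> 0"
      using xs by (intro selfadjoint_approximate_square_eigenvector[OF assms(2,4) \<open>s \<ge> 0\<close> bound _ _ norm_lim]) auto
    moreover have "s > 0"
      using False \<open>s \<ge> 0\<close> by simp
    ultimately obtain v where "v \<in> S" and "v \<noteq> 0" and "B (B v) = s\<^sup>2 *\<^sub>R v"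
      using compact_on_square_eigenvector[OF assms(1) \<open>closed S\<close> assms(5) _ xs norm_lim] by blast
    then show ?thesis
      using eigenvector_of_square_eigenvector[OF bounded_linear.linear[OF assms(1)] sub assms(4)] by blast
  qed
qed

section \<open>The Sylvester equation\<close>

lemma mem_if_shifted_image_mem:
  fixes A :: "'a::chilbert_space \<Rightarrow> 'a"
  assumes "bounded_clinear A" and "selfadjoint A" and M: "closed_csubspace M" and "invariant M A"
    and "l \<notin> spectrum_on (orth M) A" and "A w - l *\<^sub>C w \<in> M"
  shows "w \<in> M"
proof -
  interpret A: bounded_linear A
    using assms(1) by (simp add: bounded_clinear_def)
  have sub: "complex_vector.subspace M" and sub_orth: "complex_vector.subspace (orth M)"
    using M closed_csubspace_orth[of M] by (simp_all add: closed_csubspace_iff)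
  obtain p where "p \<in> M" and y: "w - p \<in> orth M"
    using orth_decomposition[OF M] by blast
  have "A p \<in> M"
    using assms(4) \<open>p \<in> M\<close> unfolding invariant_def by blast
  have "A (w - p) \<in> orth M"
    using invariant_orth_selfadjoint[OF assms(2,4)] y unfolding invariant_def by blast
  have "A (w - p) - l *\<^sub>C (w - p) = (A w - l *\<^sub>C w) - (A p - l *\<^sub>C p)"
    by (simp add: A.diff complex_vector.scale_right_diff_distrib)
  also have "\<dots> \<in> M"
    using sub assms(6) \<open>p \<in> M\<close> \<open>A p \<in> M\<close>
    by (meson complex_vector.subspace_diff complex_vector.subspace_scale)
  finally have "A (w - p) - l *\<^sub>C (w - p) \<in> M" .
  moreover have "A (w - p) - l *\<^sub>C (w - p) \<in> orth M"
    using sub_orth \<open>A (w - p) \<in> orth M\<close> y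
    by (meson complex_vector.subspace_diff complex_vector.subspace_scale)
  ultimately have kernel: "A (w - p) - l *\<^sub>C (w - p) = 0"
    by (rule mem_orth_self_eq_zero)
  have "invertible_on (orth M) (\<lambda>x. A x - l *\<^sub>C x)"
    using assms(5) by (simp add: spectrum_on_def)
  then have "w - p = 0"
    by (rule invertible_on_kernel_eq_zero[OF _ complex_vector.subspace_0[OF sub_orth] _ y])
      (simp_all add: kernel)
  then show ?thesis
    using \<open>p \<in> M\<close> by simp
qed

lemma sylvester_invariant_Int_vimage:
  assumes "closed_csubspace M" and "invariant M A" and "invariant M B" and "invariant M C"
    and "\<And>x. A (D x) - D (B x) = C x"
  shows "invariant (M \<inter> D -` M) B"
proof -
  have "D (B x) \<in> M" if "x \<in> M" and "D x \<in> M" for x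
  proof -
    have "D (B x) = A (D x) - C x"
      using assms(5)[of x] by (simp add: algebra_simps)
    then show ?thesis
      using assms(1,2,4) that unfolding invariant_def closed_csubspace_iff
      by (auto intro!: complex_vector.subspace_diff)
  qed
  then show ?thesis
    using assms(3) unfolding invariant_def by auto
qed

lemma sylvester_eigenvector_image_mem:
  fixes A B C D :: "'a::chilbert_space \<Rightarrow> 'a"
  assumes "bounded_clinear A" and "bounded_linear B" and "bounded_clinear D" and "selfadjoint A"
    and M: "closed_csubspace M" and "invariant M A" and "invariant M C"
    and "spectrum_on (orth M) A \<inter> spectrum_on M B = {}"
    and "A (D v) - D (B v) = C v" and "v \<in> M" and "v \<noteq> 0" and "B v = l *\<^sub>C v"
  shows "D v \<in> M"
proof (rule mem_if_shifted_image_mem[OF assms(1,4) M assms(6)])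
  have "l \<in> spectrum_on M B"
    using eigenvalue_in_spectrum_on[OF bounded_linear.linear[OF assms(2)] _ assms(10-12)] M
    by (simp add: closed_csubspace_def)
  then show "l \<notin> spectrum_on (orth M) A"
    using assms(8) by blast
  have "D (B v) = l *\<^sub>C D v"
    using assms(3,12) by (simp add: bounded_clinear_def)
  then have "A (D v) - l *\<^sub>C D v = C v"
    using assms(9) by simp
  then show "A (D v) - l *\<^sub>C D v \<in> M"
    using assms(7,10) unfolding invariant_def by auto
qed

theorem lemma2p2:
  fixes A B C D :: "'a::chilbert_space \<Rightarrow> 'a" and M :: "'a set"
  assumes "bounded_clinear A" and "bounded_clinear B" and "bounded_clinear C"
    and "selfadjoint A" and "selfadjoint B"
    and "closed_csubspace M"
    and "invariant M A" and "invariant M B" and "invariant M C"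
    and "spectrum_on (orth M) A \<inter> spectrum_on M B = {}"
    and "compact_on M B"
    and "bounded_clinear D"
    and "\<And>x. A (D x) - D (B x) = C x"
  shows "invariant M D"
proof -
  have B: "bounded_linear B"
    using assms(2) by (simp add: bounded_clinear_def)
  define K where "K = M \<inter> D -` M"
  have K: "closed_csubspace K"
    unfolding K_def by (intro closed_csubspace_Int closed_csubspace_vimage assms(6,12))
  have "invariant K B"
    unfolding K_def by (rule sylvester_invariant_Int_vimage[OF assms(6-9,13)])
  define K' where "K' = M \<inter> orth K"
  have K': "closed_csubspace K'"
    unfolding K'_def by (intro closed_csubspace_Int closed_csubspace_orth assms(6))
  have "invariant K' B"
    using assms(8) invariant_orth_selfadjoint[OF assms(5) \<open>invariant K B\<close>]
    unfolding K'_def invariant_def by blast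
  moreover have "compact_on K' B"
    using assms(11) by (rule compact_on_subset) (simp add: K'_def)
  moreover have "v = 0" if "v \<in> K'" and "B v = l *\<^sub>C v" for v l
  proof (rule ccontr)
    assume "v \<noteq> 0"
    have "v \<in> M"
      using \<open>v \<in> K'\<close> unfolding K'_def by blast
    then have "D v \<in> M"
      using \<open>v \<noteq> 0\<close> by (rule sylvester_eigenvector_image_mem[where v = v, OF assms(1) B assms(12,4,6,7,9,10,13) _ _ that(2)])
    then have "v \<in> K \<inter> orth K"
      using that(1) \<open>v \<in> M\<close> unfolding K'_def K_def by blast
    then show False
      using \<open>v \<noteq> 0\<close> mem_orth_self_eq_zero by blast
  qed
  ultimately have "K' = {0}"
    using selfadjoint_compact_on_eigenvector[OF B assms(5) K'] by blast
  then have "K = M"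
    using closed_csubspace_eq_if_orth_trivial[OF K assms(6)] unfolding K'_def K_def by blast
  then show ?thesis
    unfolding invariant_def K_def by blast
qed

end
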